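(* Let $\mathbb{P}$ be a class of closed formulas, and let $P$ be a proof in $\mathbf{FI}^{\mathbb{P}}$ of a safety problem $\Pi$. Then $\operatorname{Inv}^\rightarrow(P)$ is a safe inductive invariant of $\Pi$, and if $P$ contains $n\in\mathbb{N}$ instances of the rule (Ind), then $\operatorname{Inv}^\rightarrow(P)$ is a conjunction of $n$ predicates from $\mathbb{P}$.
   Context: A first-order vocabulary $\Sigma$ consists of constant, function and relation symbols; $\Sigma'=\{a' : a\in\Sigma\}$ is a disjoint copy, and for a formula $\varphi$ over $\Sigma$, $\varphi'$ denotes $\varphi$ with every symbol replaced by its primed copy. A safety problem is a triple $(\iota,\tau,\beta)$, where $\iota,\beta$ are closed formulas over $\Sigma$ and $\tau$ is a closed formula over $\Sigma\uplus\Sigma'$. $A\Rightarrow B$ means the implication $A\to B$ is valid. A closed formula $\varphi$ over $\Sigma$ is a safe inductive invariant of $(\iota,\tau,\beta)$ if $\iota\Rightarrow\varphi$, $\varphi\wedge\tau\Rightarrow\varphi'$ and $\varphi\Rightarrow\neg\beta$. Proofs: a proof of $\Pi$ in a system is a finite tree whose nodes are safety problems, whose root is $\Pi$, and in which each node together with its children is an instance of one of the system's inference rules, with side conditions valid. The system $\mathbf{FI}$ has the following rules ($\varphi$ ranges over closed formulas over $\Sigma$): (Ind): no premises; conclusion $(\iota,\tau,\neg\varphi)$; side conditions $\iota\Rightarrow\varphi$ and $\varphi\wedge\tau\Rightarrow\varphi'$. (Cons): premise $(\iota,\tau,\neg\varphi)$; conclusion $(\iota,\tau,\beta)$; side condition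 $\varphi\Rightarrow\neg\beta$. (Inc): premises $(\iota,\tau,\neg\varphi)$ and $(\iota\wedge\varphi,\ \tau\wedge\varphi\wedge\varphi',\ \beta\wedge\varphi)$; conclusion $(\iota,\tau,\beta)$. $\mathbf{FI}^{\mathbb{P}}$ is $\mathbf{FI}$ with applications of (Ind) restricted to $\varphi\in\mathbb{P}$. $\operatorname{Inv}^\rightarrow(P)$ is defined by induction on the proof $P$: if the root of $P$ is the conclusion $(\iota,\tau,\neg\varphi)$ of (Ind), then $\operatorname{Inv}^\rightarrow(P)=\varphi$; if the root is the conclusion of (Cons) whose premise has proof $\tilde P$, then $\operatorname{Inv}^\rightarrow(P)=\operatorname{Inv}^\rightarrow(\tilde P)$; if the root is the conclusion of (Inc) whose premises have proofs $P_1,P_2$, then $\operatorname{Inv}^\rightarrow(P)=\operatorname{Inv}^\rightarrow(P_1)\wedge\operatorname{Inv}^\rightarrow(P_2)$. *)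

theory Defs
  imports Main
begin

text \<open>Symbols of the combined vocabulary Sigma + Sigma': Cur a is a symbol of Sigma,
  Nxt a is its primed copy. Constants are 0-ary function symbols.\<close>
datatype 'a sym = Cur 'a | Nxt 'a

datatype 'f trm = Var nat | Fn 'f "'f trm list"

datatype ('f, 'r) fm =
    FF
  | Eq "'f trm" "'f trm"
  | Rel 'r "'f trm list"
  | Neg "('f, 'r) fm"
  | And "('f, 'r) fm" "('f, 'r) fm"
  | Or "('f, 'r) fm" "('f, 'r) fm"
  | Imp "('f, 'r) fm" "('f, 'r) fm"
  | All nat "('f, 'r) fm"
  | Ex nat "('f, 'r) fm"

type_synonym ('f, 'r) form = "('f sym, 'r sym) fm"

fun tvars :: "'f trm \<Rightarrow> nat set" where
  "tvars (Var n) = {n}"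
| "tvars (Fn f ts) = (\<Union>t\<in>set ts. tvars t)"

fun tfuns :: "'f trm \<Rightarrow> 'f set" where
  "tfuns (Var n) = {}"
| "tfuns (Fn f ts) = insert f (\<Union>t\<in>set ts. tfuns t)"

fun tmap :: "('f \<Rightarrow> 'g) \<Rightarrow> 'f trm \<Rightarrow> 'g trm" where
  "tmap h (Var n) = Var n"
| "tmap h (Fn f ts) = Fn (h f) (map (tmap h) ts)"

fun fv :: "('f, 'r) fm \<Rightarrow> nat set" where
  "fv FF = {}"
| "fv (Eq s t) = tvars s \<union> tvars t"
| "fv (Rel r ts) = (\<Union>t\<in>set ts. tvars t)"
| "fv (Neg p) = fv p"
| "fv (And p q) = fv p \<union> fv q"
| "fv (Or p q) = fv p \<union> fv q"
| "fv (Imp p q) = fv p \<union> fv q"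
| "fv (All x p) = fv p - {x}"
| "fv (Ex x p) = fv p - {x}"

fun ffuns :: "('f, 'r) fm \<Rightarrow> 'f set" where
  "ffuns FF = {}"
| "ffuns (Eq s t) = tfuns s \<union> tfuns t"
| "ffuns (Rel r ts) = (\<Union>t\<in>set ts. tfuns t)"
| "ffuns (Neg p) = ffuns p"
| "ffuns (And p q) = ffuns p \<union> ffuns q"
| "ffuns (Or p q) = ffuns p \<union> ffuns q"
| "ffuns (Imp p q) = ffuns p \<union> ffuns q"
| "ffuns (All x p) = ffuns p"
| "ffuns (Ex x p) = ffuns p"

fun frels :: "('f, 'r) fm \<Rightarrow> 'r set" where
  "frels FF = {}"
| "frels (Eq s t) = {}"
| "frels (Rel r ts) = {r}"
| "frels (Neg p) = frels p"
| "frels (And p q) = frels p \<union> frels q"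
| "frels (Or p q) = frels p \<union> frels q"
| "frels (Imp p q) = frels p \<union> frels q"
| "frels (All x p) = frels p"
| "frels (Ex x p) = frels p"

fun fmap :: "('f \<Rightarrow> 'g) \<Rightarrow> ('r \<Rightarrow> 's) \<Rightarrow> ('f, 'r) fm \<Rightarrow> ('g, 's) fm" where
  "fmap h k FF = FF"
| "fmap h k (Eq s t) = Eq (tmap h s) (tmap h t)"
| "fmap h k (Rel r ts) = Rel (k r) (map (tmap h) ts)"
| "fmap h k (Neg p) = Neg (fmap h k p)"
| "fmap h k (And p q) = And (fmap h k p) (fmap h k q)"
| "fmap h k (Or p q) = Or (fmap h k p) (fmap h k q)"
| "fmap h k (Imp p q) = Imp (fmap h k p) (fmap h k q)"
| "fmap h k (All x p) = All x (fmap h k p)"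
| "fmap h k (Ex x p) = Ex x (fmap h k p)"

fun prime_sym :: "'a sym \<Rightarrow> 'a sym" where
  "prime_sym (Cur a) = Nxt a"
| "prime_sym (Nxt a) = Nxt a"

definition prime :: "('f, 'r) form \<Rightarrow> ('f, 'r) form" where
  "prime p = fmap prime_sym prime_sym p"

definition is_cur :: "'a sym \<Rightarrow> bool" where
  "is_cur s = (\<exists>a. s = Cur a)"

definition closed_sigma :: "('f, 'r) form \<Rightarrow> bool" where
  "closed_sigma p \<longleftrightarrow> fv p = {} \<and> (\<forall>f\<in>ffuns p. is_cur f) \<and> (\<forall>r\<in>frels p. is_cur r)"

definition closed_sigma2 :: "('f, 'r) form \<Rightarrow> bool" where
  "closed_sigma2 p \<longleftrightarrow> fv p = {}"

fun teval :: "('f \<Rightarrow> 'd list \<Rightarrow> 'd) \<Rightarrow> (nat \<Rightarrow> 'd) \<Rightarrow> 'f trm \<Rightarrow> 'd" where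
  "teval F e (Var n) = e n"
| "teval F e (Fn f ts) = F f (map (teval F e) ts)"

fun sat :: "('f \<Rightarrow> 'd list \<Rightarrow> 'd) \<Rightarrow> ('r \<Rightarrow> 'd list \<Rightarrow> bool) \<Rightarrow> (nat \<Rightarrow> 'd)
            \<Rightarrow> ('f, 'r) fm \<Rightarrow> bool" where
  "sat F R e FF = False"
| "sat F R e (Eq s t) = (teval F e s = teval F e t)"
| "sat F R e (Rel r ts) = R r (map (teval F e) ts)"
| "sat F R e (Neg p) = (\<not> sat F R e p)"
| "sat F R e (And p q) = (sat F R e p \<and> sat F R e q)"
| "sat F R e (Or p q) = (sat F R e p \<or> sat F R e q)"
| "sat F R e (Imp p q) = (sat F R e p \<longrightarrow> sat F R e q)"
| "sat F R e (All x p) = (\<forall>d. sat F R (e(x := d)) p)"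
| "sat F R e (Ex x p) = (\<exists>d. sat F R (e(x := d)) p)"

text \<open>Validity: truth in every structure (and every assignment) whose domain is
  the (nonempty) type 'd.\<close>
definition valid :: "'d itself \<Rightarrow> ('f, 'r) fm \<Rightarrow> bool" where
  "valid _ p \<longleftrightarrow> (\<forall>(F :: 'f \<Rightarrow> 'd list \<Rightarrow> 'd) R e. sat F R e p)"

definition entails :: "'d itself \<Rightarrow> ('f, 'r) fm \<Rightarrow> ('f, 'r) fm \<Rightarrow> bool" where
  "entails D a b \<longleftrightarrow> valid D (Imp a b)"

type_synonym ('f, 'r) sp = "('f, 'r) form \<times> ('f, 'r) form \<times> ('f, 'r) form"

definition safety_problem :: "('f, 'r) sp \<Rightarrow> bool" where
  "safety_problem \<Pi> = (case \<Pi> of (\<iota>, \<tau>, \<beta>) \<Rightarrow>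
      closed_sigma \<iota> \<and> closed_sigma2 \<tau> \<and> closed_sigma \<beta>)"

definition safe_inductive_invariant :: "'d itself \<Rightarrow> ('f, 'r) form \<Rightarrow> ('f, 'r) sp \<Rightarrow> bool" where
  "safe_inductive_invariant D \<phi> \<Pi> = (case \<Pi> of (\<iota>, \<tau>, \<beta>) \<Rightarrow>
      closed_sigma \<phi> \<and> entails D \<iota> \<phi> \<and> entails D (And \<phi> \<tau>) (prime \<phi>)
      \<and> entails D \<phi> (Neg \<beta>))"

text \<open>Proof trees: each node carries its safety problem and is tagged with the rule
  whose conclusion it is.\<close>
datatype ('f, 'r) ptree =
    PInd "('f, 'r) sp"
  | PCons "('f, 'r) sp" "('f, 'r) ptree"
  | PInc "('f, 'r) sp" "('f, 'r) ptree" "('f, 'r) ptree"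

fun root :: "('f, 'r) ptree \<Rightarrow> ('f, 'r) sp" where
  "root (PInd \<Pi>) = \<Pi>"
| "root (PCons \<Pi> _) = \<Pi>"
| "root (PInc \<Pi> _ _) = \<Pi>"

fun is_proof :: "'d itself \<Rightarrow> ('f, 'r) form set \<Rightarrow> ('f, 'r) ptree \<Rightarrow> bool" where
  "is_proof D PP (PInd (\<iota>, \<tau>, \<beta>)) \<longleftrightarrow>
     safety_problem (\<iota>, \<tau>, \<beta>) \<and>
     (\<exists>\<phi>. closed_sigma \<phi> \<and> \<phi> \<in> PP \<and> \<beta> = Neg \<phi> \<and>
          entails D \<iota> \<phi> \<and> entails D (And \<phi> \<tau>) (prime \<phi>))"
| "is_proof D PP (PCons (\<iota>, \<tau>, \<beta>) Q) \<longleftrightarrow>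
     safety_problem (\<iota>, \<tau>, \<beta>) \<and> is_proof D PP Q \<and>
     (\<exists>\<phi>. closed_sigma \<phi> \<and> root Q = (\<iota>, \<tau>, Neg \<phi>) \<and> entails D \<phi> (Neg \<beta>))"
| "is_proof D PP (PInc (\<iota>, \<tau>, \<beta>) Q1 Q2) \<longleftrightarrow>
     safety_problem (\<iota>, \<tau>, \<beta>) \<and> is_proof D PP Q1 \<and> is_proof D PP Q2 \<and>
     (\<exists>\<phi>. closed_sigma \<phi> \<and> root Q1 = (\<iota>, \<tau>, Neg \<phi>) \<and>
          root Q2 = (And \<iota> \<phi>, And (And \<tau> \<phi>) (prime \<phi>), And \<beta> \<phi>))"

fun un_neg :: "('f, 'r) fm \<Rightarrow> ('f, 'r) fm" where
  "un_neg (Neg \<phi>) = \<phi>"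
| "un_neg p = undefined"

fun inv_fwd :: "('f, 'r) ptree \<Rightarrow> ('f, 'r) form" where
  "inv_fwd (PInd (\<iota>, \<tau>, \<beta>)) = un_neg \<beta>"
| "inv_fwd (PCons _ Q) = inv_fwd Q"
| "inv_fwd (PInc _ Q1 Q2) = And (inv_fwd Q1) (inv_fwd Q2)"

fun num_ind :: "('f, 'r) ptree \<Rightarrow> nat" where
  "num_ind (PInd _) = 1"
| "num_ind (PCons _ Q) = num_ind Q"
| "num_ind (PInc _ Q1 Q2) = num_ind Q1 + num_ind Q2"

inductive conj_of :: "('f, 'r) fm \<Rightarrow> ('f, 'r) fm list \<Rightarrow> bool" where
  single: "conj_of \<phi> [\<phi>]"
| conj: "conj_of \<psi>1 xs \<Longrightarrow> conj_of \<psi>2 ys \<Longrightarrow> conj_of (And \<psi>1 \<psi>2) (xs @ ys)"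

end

theory Submission
  imports Defs
begin

text \<open>Each rule of FI is sound for safe inductive invariants: (Ind) yields its formula
  \<open>\<phi>\<close>, (Cons) keeps the invariant of its premise, and (Inc) conjoins the invariants of
  its two premises. The invariant \<open>a\<close> of the first premise of (Inc) entails \<open>\<phi>\<close>, hence
  \<open>a \<and> \<tau>\<close> entails \<open>\<phi>'\<close>, so \<open>a \<and> b \<and> \<tau>\<close> implies the strengthened transition relation
  \<open>\<tau> \<and> \<phi> \<and> \<phi>'\<close> under which \<open>b\<close> is inductive.\<close>

lemma teval_tmap: "teval F e (tmap h t) = teval (\<lambda>f. F (h f)) e t"
  by (induction t) (auto cong: map_cong)

lemma sat_fmap: "sat F R e (fmap h k p) = sat (\<lambda>f. F (h f)) (\<lambda>r. R (k r)) e p"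
  by (induction p arbitrary: e) (auto simp: teval_tmap comp_def)

lemma entails_iff:
  fixes D :: "'d itself" and a b :: "('f, 'r) fm"
  shows "entails D a b \<longleftrightarrow> (\<forall>(F :: 'f \<Rightarrow> 'd list \<Rightarrow> 'd) R e. sat F R e a \<longrightarrow> sat F R e b)"
  by (simp add: entails_def valid_def)

lemma entails_prime: "entails D a b \<Longrightarrow> entails D (prime a) (prime b)"
  by (simp add: entails_iff prime_def sat_fmap)

lemma closed_sigma_And: "closed_sigma a \<Longrightarrow> closed_sigma b \<Longrightarrow> closed_sigma (And a b)"
  by (auto simp: closed_sigma_def)

lemma safe_inductive_invariant_Ind:
  assumes "closed_sigma \<phi>" and "entails D \<iota> \<phi>" and "entails D (And \<phi> \<tau>) (prime \<phi>)"
  shows "safe_inductive_invariant D \<phi> (\<iota>, \<tau>, Neg \<phi>)"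
  using assms by (simp add: safe_inductive_invariant_def entails_iff)

lemma safe_inductive_invariant_Cons:
  assumes "safe_inductive_invariant D a (\<iota>, \<tau>, Neg \<phi>)" and "entails D \<phi> (Neg \<beta>)"
  shows "safe_inductive_invariant D a (\<iota>, \<tau>, \<beta>)"
  using assms by (simp add: safe_inductive_invariant_def entails_iff)

lemma safe_inductive_invariant_Inc:
  assumes a: "safe_inductive_invariant D a (\<iota>, \<tau>, Neg \<phi>)"
    and b: "safe_inductive_invariant D b (And \<iota> \<phi>, And (And \<tau> \<phi>) (prime \<phi>), And \<beta> \<phi>)"
  shows "safe_inductive_invariant D (And a b) (\<iota>, \<tau>, \<beta>)"
proof -
  have a_closed: "closed_sigma a" and a_init: "entails D \<iota> a"
    and a_step: "entails D (And a \<tau>) (prime a)" and a_phi: "entails D a (Neg (Neg \<phi>))"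
    using a by (simp_all add: safe_inductive_invariant_def)
  have b_closed: "closed_sigma b" and b_init: "entails D (And \<iota> \<phi>) b"
    and b_step: "entails D (And b (And (And \<tau> \<phi>) (prime \<phi>))) (prime b)"
    and b_safe: "entails D b (Neg (And \<beta> \<phi>))"
    using b by (simp_all add: safe_inductive_invariant_def)
  have a_phi': "entails D (prime a) (prime (Neg (Neg \<phi>)))"
    using a_phi by (rule entails_prime)
  have "entails D (And (And a b) \<tau>) (prime (And a b))"
    using a_step a_phi b_step a_phi' by (simp add: entails_iff prime_def sat_fmap)
  moreover have "entails D \<iota> (And a b)"
    using a_init a_phi b_init by (simp add: entails_iff)
  moreover have "entails D (And a b) (Neg \<beta>)"
    using a_phi b_safe by (simp add: entails_iff) blast
  ultimately show ?thesis
    using closed_sigma_And[OF a_closed b_closed] by (simp add: safe_inductive_invariant_def)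
qed

lemma inv_fwd_safe_inductive_invariant:
  "is_proof D PP P \<Longrightarrow> safe_inductive_invariant D (inv_fwd P) (root P)"
proof (induction D PP P rule: is_proof.induct)
  case (1 D PP \<iota> \<tau> \<beta>)
  then show ?case by (auto intro: safe_inductive_invariant_Ind)
next
  case (2 D PP \<iota> \<tau> \<beta> Q)
  then show ?case by (auto intro: safe_inductive_invariant_Cons)
next
  case (3 D PP \<iota> \<tau> \<beta> Q1 Q2)
  then show ?case by (auto intro: safe_inductive_invariant_Inc)
qed

lemma inv_fwd_conj_of:
  "is_proof D PP P \<Longrightarrow>
     \<exists>\<phi>s. length \<phi>s = num_ind P \<and> set \<phi>s \<subseteq> PP \<and> conj_of (inv_fwd P) \<phi>s"
proof (induction D PP P rule: is_proof.induct)
  case (1 D PP \<iota> \<tau> \<beta>)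
  then show ?case by (auto intro!: exI[of _ "[un_neg \<beta>]"] conj_of.single)
next
  case (2 D PP \<iota> \<tau> \<beta> Q)
  then show ?case by simp
next
  case (3 D PP \<iota> \<tau> \<beta> Q1 Q2)
  then obtain xs ys where
    "length xs = num_ind Q1" "set xs \<subseteq> PP" "conj_of (inv_fwd Q1) xs"
    "length ys = num_ind Q2" "set ys \<subseteq> PP" "conj_of (inv_fwd Q2) ys"
    by auto
  then show ?case by (auto intro!: exI[of _ "xs @ ys"] conj_of.conj)
qed

theorem theorem4p6:
  fixes D :: "'d itself"
    and PP :: "('f, 'r) form set"
    and P :: "('f, 'r) ptree"
    and \<Pi> :: "('f, 'r) sp"
    and n :: nat
  assumes "\<forall>\<phi>\<in>PP. closed_sigma \<phi>"
    and "is_proof D PP P"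
    and "root P = \<Pi>"
    and "num_ind P = n"
  shows "safe_inductive_invariant D (inv_fwd P) \<Pi>
         \<and> (\<exists>\<phi>s. length \<phi>s = n \<and> set \<phi>s \<subseteq> PP \<and> conj_of (inv_fwd P) \<phi>s)"
  using inv_fwd_safe_inductive_invariant[OF assms(2)] inv_fwd_conj_of[OF assms(2)] assms(3,4)
  by simp

end
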